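(* Let $\alpha_2\approx0.2797707433$ be the root in $[0,1]$ of $8\alpha^4-8\alpha^3+8\alpha^2=1/2$ and let $\alpha_2\le\alpha\le 1/3$. If $(x,y)\in A_2$ and $G_\alpha(x,y),G_\alpha^2(x,y)\in A_1$, then $G_\alpha^3(x,y)\in A_2$; i.e., a point coming from $A_2$ remains in $A_1$ for at most $2$ consecutive steps.
   Context: Let $\tau:[0,1]\to[0,1]$ be the symmetric tent map, $\tau(x)=2x$ for $0\le x<1/2$ and $\tau(x)=2-2x$ for $1/2\le x\le 1$. For $0<\alpha<1$ define $G_\alpha:[0,1]^2\to[0,1]^2$ by $G_\alpha(x,y)=(y,\tau(\alpha y+(1-\alpha)x))$. Let $S(x,y)=\alpha y+(1-\alpha)x$, $A_1=\{(x,y)\in[0,1]^2: S(x,y)<1/2\}$ and $A_2=\{(x,y)\in[0,1]^2: S(x,y)\ge 1/2\}$. *)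

theory Defs
  imports Complex_Main
begin

definition tent :: "real \<Rightarrow> real" where
  "tent x = (if x < 1/2 then 2 * x else 2 - 2 * x)"

definition S :: "real \<Rightarrow> real \<times> real \<Rightarrow> real" where
  "S \<alpha> p = \<alpha> * snd p + (1 - \<alpha>) * fst p"

definition G :: "real \<Rightarrow> real \<times> real \<Rightarrow> real \<times> real" where
  "G \<alpha> p = (snd p, tent (S \<alpha> p))"

definition unit_square :: "(real \<times> real) set" where
  "unit_square = {p. 0 \<le> fst p \<and> fst p \<le> 1 \<and> 0 \<le> snd p \<and> snd p \<le> 1}"

definition A1 :: "real \<Rightarrow> (real \<times> real) set" where
  "A1 \<alpha> = {p \<in> unit_square. S \<alpha> p < 1/2}"

definition A2 :: "real \<Rightarrow> (real \<times> real) set" where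
  "A2 \<alpha> = {p \<in> unit_square. S \<alpha> p \<ge> 1/2}"

end

theory Submission
  imports Defs
begin

text \<open>Starting in \<open>A2\<close>, the first step gives \<open>z\<^sub>1 = 2 - 2 S\<^sub>0\<close> and the next two steps are
  doublings, so \<open>S\<^sub>3\<close> is an explicit linear expression in \<open>1 - S\<^sub>0\<close> and \<open>y\<close>.  Since
  \<open>x \<le> 1\<close> gives \<open>1 - S\<^sub>0 \<ge> \<alpha> (1 - y)\<close>, this yields
  \<open>S\<^sub>3 \<ge> f(\<alpha>) (1 - y) + (4\<alpha>\<^sup>2 - 2\<alpha> + 2)(1 - \<alpha>) y\<close> with \<open>f(\<alpha>) = 8\<alpha>\<^sup>4 - 8\<alpha>\<^sup>3 + 8\<alpha>\<^sup>2\<close>.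
  Both coefficients are at least \<open>1/2\<close>: the first because \<open>f\<close> is increasing and
  \<open>f(\<alpha>\<^sub>2) = 1/2\<close>, the second because \<open>\<alpha> \<le> 1/3\<close>.\<close>

lemma tent_in_unit_interval:
  assumes "0 \<le> t" "t \<le> 1"
  shows "0 \<le> tent t \<and> tent t \<le> 1"
  using assms by (simp add: tent_def)

lemma S_in_unit_interval:
  assumes "p \<in> unit_square" "0 \<le> \<alpha>" "\<alpha> \<le> 1"
  shows "0 \<le> S \<alpha> p \<and> S \<alpha> p \<le> 1"
proof -
  have "0 \<le> fst p" "fst p \<le> 1" "0 \<le> snd p" "snd p \<le> 1"
    using assms(1) by (auto simp: unit_square_def)
  then have "\<alpha> * snd p \<le> \<alpha>" "(1 - \<alpha>) * fst p \<le> 1 - \<alpha>"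
    using assms(2,3) by (simp_all add: mult_left_le)
  then show ?thesis
    using \<open>0 \<le> fst p\<close> \<open>0 \<le> snd p\<close> assms(2,3) by (simp add: S_def)
qed

lemma G_unit_square:
  assumes "p \<in> unit_square" "0 \<le> \<alpha>" "\<alpha> \<le> 1"
  shows "G \<alpha> p \<in> unit_square"
  using assms tent_in_unit_interval S_in_unit_interval[OF assms]
  by (simp add: G_def unit_square_def)

lemma funpow_G_unit_square:
  assumes "p \<in> unit_square" "0 \<le> \<alpha>" "\<alpha> \<le> 1"
  shows "(G \<alpha> ^^ n) p \<in> unit_square"
  by (induction n) (simp_all add: assms G_unit_square)

lemma G_on_A1: "p \<in> A1 \<alpha> \<Longrightarrow> G \<alpha> p = (snd p, 2 * S \<alpha> p)"
  by (simp add: A1_def G_def tent_def)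

lemma G_on_A2: "p \<in> A2 \<alpha> \<Longrightarrow> G \<alpha> p = (snd p, 2 - 2 * S \<alpha> p)"
  by (simp add: A2_def G_def tent_def)

lemma S_funpow3_A2_A1_A1:
  assumes "p \<in> A2 \<alpha>" "G \<alpha> p \<in> A1 \<alpha>" "(G \<alpha> ^^ 2) p \<in> A1 \<alpha>"
  shows "S \<alpha> ((G \<alpha> ^^ 3) p)
    = (8*\<alpha>^3 - 8*\<alpha>^2 + 8*\<alpha>) * (1 - S \<alpha> p) + (4*\<alpha>^2 - 2*\<alpha> + 2) * (1 - \<alpha>) * snd p"
proof -
  define z\<^sub>1 where "z\<^sub>1 = 2 - 2 * S \<alpha> p"
  define z\<^sub>2 where "z\<^sub>2 = 2 * (\<alpha> * z\<^sub>1 + (1 - \<alpha>) * snd p)"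
  define z\<^sub>3 where "z\<^sub>3 = 2 * (\<alpha> * z\<^sub>2 + (1 - \<alpha>) * z\<^sub>1)"
  have G1: "G \<alpha> p = (snd p, z\<^sub>1)"
    using G_on_A2[OF assms(1)] by (simp add: z\<^sub>1_def)
  have G2: "(G \<alpha> ^^ 2) p = (z\<^sub>1, z\<^sub>2)"
    using G_on_A1[OF assms(2)] by (simp add: numeral_2_eq_2 G1 S_def z\<^sub>2_def)
  have "(G \<alpha> ^^ 3) p = (z\<^sub>2, z\<^sub>3)"
    using G_on_A1[OF assms(3)] G2 by (simp add: numeral_3_eq_3 numeral_2_eq_2 S_def z\<^sub>3_def)
  then show ?thesis
    by (simp add: S_def z\<^sub>1_def z\<^sub>2_def z\<^sub>3_def algebra_simps power2_eq_square power3_eq_cube)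
qed

lemma quartic_mono:
  fixes a b :: real
  assumes "0 \<le> b" "b \<le> a"
  shows "8*b^4 - 8*b^3 + 8*b^2 \<le> 8*a^4 - 8*a^3 + 8*a^2"
proof -
  \<comment> \<open>The difference factors as \<open>8 (a - b) ((a + b)(a\<^sup>2 + b\<^sup>2 + 1) - (a\<^sup>2 + a b + b\<^sup>2))\<close>.\<close>
  define s where "s = a + b"
  have "s^2 \<le> 2 * (a^2 + b^2)"
    using sum_squares_ge_zero[of "a - b" 0] by (simp add: s_def power2_eq_square algebra_simps)
  then have "s * (s^2 / 2 + 1) \<le> s * (a^2 + b^2 + 1)"
    using assms by (intro mult_left_mono) (auto simp: s_def)
  moreover have "s^2 \<le> s * (s^2 / 2 + 1)"
  proof -
    have "0 \<le> s * ((s - 1)^2 + 1)"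
      using assms by (simp add: s_def)
    also have "\<dots> = 2 * (s * (s^2 / 2 + 1) - s^2)"
      by (simp add: power2_eq_square algebra_simps)
    finally show ?thesis
      by simp
  qed
  moreover have "a^2 + a*b + b^2 \<le> s^2"
    using assms by (simp add: s_def power2_eq_square algebra_simps)
  ultimately have "0 \<le> s * (a^2 + b^2 + 1) - (a^2 + a*b + b^2)"
    by linarith
  then have "0 \<le> (a - b) * (8 * (s * (a^2 + b^2 + 1) - (a^2 + a*b + b^2)))"
    using assms by simp
  then show ?thesis
    by (simp add: s_def algebra_simps power2_eq_square power3_eq_cube power4_eq_xxxx)
qed

lemma three_step_lower_bound:
  fixes \<alpha> x y :: real
  assumes "0 \<le> \<alpha>" "\<alpha> \<le> 1/3" "x \<le> 1" "0 \<le> y" "y \<le> 1"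
    and "1/2 \<le> 8*\<alpha>^4 - 8*\<alpha>^3 + 8*\<alpha>^2"
  shows "1/2 \<le> (8*\<alpha>^3 - 8*\<alpha>^2 + 8*\<alpha>) * (1 - S \<alpha> (x, y)) + (4*\<alpha>^2 - 2*\<alpha> + 2) * (1 - \<alpha>) * y"
proof -
  define c where "c = 8*\<alpha>^3 - 8*\<alpha>^2 + 8*\<alpha>"
  define d where "d = (4*\<alpha>^2 - 2*\<alpha> + 2) * (1 - \<alpha>)"
  have "1 - S \<alpha> (x, y) = \<alpha> * (1 - y) + (1 - \<alpha>) * (1 - x)"
    by (simp add: S_def algebra_simps)
  then have "\<alpha> * (1 - y) \<le> 1 - S \<alpha> (x, y)"
    using assms by simp
  moreover have "0 \<le> c"
  proof -
    have "0 \<le> 2 * \<alpha> * ((2*\<alpha> - 1)^2 + 3)"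
      using assms by simp
    also have "\<dots> = c"
      by (simp add: c_def power2_eq_square power3_eq_cube algebra_simps)
    finally show ?thesis .
  qed
  ultimately have "c * (\<alpha> * (1 - y)) \<le> c * (1 - S \<alpha> (x, y))"
    by (rule mult_left_mono)
  moreover have "c * (\<alpha> * (1 - y)) = (8*\<alpha>^4 - 8*\<alpha>^3 + 8*\<alpha>^2) * (1 - y)"
    by (simp add: c_def power2_eq_square power3_eq_cube power4_eq_xxxx algebra_simps)
  moreover have "1/2 * (1 - y) \<le> (8*\<alpha>^4 - 8*\<alpha>^3 + 8*\<alpha>^2) * (1 - y)"
    using assms by (intro mult_right_mono) auto
  ultimately have first: "1/2 * (1 - y) \<le> c * (1 - S \<alpha> (x, y))"
    by linarith
  have "3/2 * (2/3) \<le> d"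
    unfolding d_def using assms sum_squares_ge_zero[of "2*\<alpha> - 1/2" 0]
    by (intro mult_mono) (auto simp: power2_eq_square algebra_simps)
  then have second: "1/2 * y \<le> d * y"
    using assms by (intro mult_right_mono) auto
  have "(1/2 :: real) = 1/2 * (1 - y) + 1/2 * y"
    by (simp add: field_simps)
  also have "\<dots> \<le> c * (1 - S \<alpha> (x, y)) + d * y"
    using first second by (rule add_mono)
  finally show ?thesis
    unfolding c_def d_def .
qed

theorem proposition10:
  fixes \<alpha> \<alpha>\<^sub>2 x y :: real
  assumes "0 \<le> \<alpha>\<^sub>2" and "\<alpha>\<^sub>2 \<le> 1"
    and "8 * \<alpha>\<^sub>2 ^ 4 - 8 * \<alpha>\<^sub>2 ^ 3 + 8 * \<alpha>\<^sub>2 ^ 2 = 1/2"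
    and "\<alpha>\<^sub>2 \<le> \<alpha>" and "\<alpha> \<le> 1/3"
    and "(x, y) \<in> A2 \<alpha>"
    and "G \<alpha> (x, y) \<in> A1 \<alpha>"
    and "(G \<alpha> ^^ 2) (x, y) \<in> A1 \<alpha>"
  shows "(G \<alpha> ^^ 3) (x, y) \<in> A2 \<alpha>"
proof -
  have "0 \<le> \<alpha>" "\<alpha> \<le> 1"
    using assms(1,4,5) by linarith+
  have threshold: "1/2 \<le> 8*\<alpha>^4 - 8*\<alpha>^3 + 8*\<alpha>^2"
    using quartic_mono[OF assms(1,4)] assms(3) by simp
  have square: "(x, y) \<in> unit_square"
    using assms(6) by (simp add: A2_def)
  then have "x \<le> 1" "0 \<le> y" "y \<le> 1"
    by (simp_all add: unit_square_def)
  then have "1/2 \<le> S \<alpha> ((G \<alpha> ^^ 3) (x, y))"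
    using three_step_lower_bound[OF \<open>0 \<le> \<alpha>\<close> assms(5) _ _ _ threshold]
      S_funpow3_A2_A1_A1[OF assms(6-8)] by simp
  moreover have "(G \<alpha> ^^ 3) (x, y) \<in> unit_square"
    using funpow_G_unit_square[OF square \<open>0 \<le> \<alpha>\<close> \<open>\<alpha> \<le> 1\<close>] .
  ultimately show ?thesis
    by (simp add: A2_def)
qed

end
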